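(* For every graph $G$ and every $S\subseteq V(G)$, $S$ is well-linked if and only if $S$ is externally-well-linked.
   Context: A set $S\subseteq V(G)$ is well-linked if for every pair $A,B\subseteq S$ with $|A|=|B|$ there exist $|A|$ pairwise vertex-disjoint paths from $A$ to $B$. It is externally-well-linked if for every such pair these $|A|$ vertex-disjoint paths from $A$ to $B$ can moreover be chosen with no internal vertex in $S$. *)

theory Defs
  imports Main
begin

definition graph :: "'a set \<Rightarrow> ('a \<Rightarrow> 'a \<Rightarrow> bool) \<Rightarrow> bool" where
  "graph V E \<longleftrightarrow> finite V \<and> (\<forall>u v. E u v \<longrightarrow> u \<in> V \<and> v \<in> V)
     \<and> (\<forall>u v. E u v \<longrightarrow> E v u) \<and> (\<forall>v. \<not> E v v)"

definition is_path :: "'a set \<Rightarrow> ('a \<Rightarrow> 'a \<Rightarrow> bool) \<Rightarrow> 'a list \<Rightarrow> bool" where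
  "is_path V E p \<longleftrightarrow> p \<noteq> [] \<and> distinct p \<and> set p \<subseteq> V
     \<and> (\<forall>i. Suc i < length p \<longrightarrow> E (p ! i) (p ! Suc i))"

definition internal :: "'a list \<Rightarrow> 'a set" where
  "internal p = set (butlast (tl p))"

definition disjoint_paths ::
  "'a set \<Rightarrow> ('a \<Rightarrow> 'a \<Rightarrow> bool) \<Rightarrow> ('a list \<Rightarrow> bool) \<Rightarrow> 'a set \<Rightarrow> 'a set \<Rightarrow> bool" where
  "disjoint_paths V E Q A B \<longleftrightarrow> (\<exists>P. finite P \<and> card P = card A
     \<and> (\<forall>p\<in>P. is_path V E p \<and> hd p \<in> A \<and> last p \<in> B \<and> Q p)
     \<and> (\<forall>p\<in>P. \<forall>q\<in>P. p \<noteq> q \<longrightarrow> set p \<inter> set q = {}))"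

definition well_linked :: "'a set \<Rightarrow> ('a \<Rightarrow> 'a \<Rightarrow> bool) \<Rightarrow> 'a set \<Rightarrow> bool" where
  "well_linked V E S \<longleftrightarrow> (\<forall>A B. A \<subseteq> S \<longrightarrow> B \<subseteq> S \<longrightarrow> card A = card B
     \<longrightarrow> disjoint_paths V E (\<lambda>p. True) A B)"

definition externally_well_linked :: "'a set \<Rightarrow> ('a \<Rightarrow> 'a \<Rightarrow> bool) \<Rightarrow> 'a set \<Rightarrow> bool" where
  "externally_well_linked V E S \<longleftrightarrow> (\<forall>A B. A \<subseteq> S \<longrightarrow> B \<subseteq> S \<longrightarrow> card A = card B
     \<longrightarrow> disjoint_paths V E (\<lambda>p. internal p \<inter> S = {}) A B)"

end

theory Submission
  imports Defs "HOL-Library.Disjoint_Sets"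
begin

text \<open>
  Externally well-linked trivially implies well-linked. Conversely, let A, B be subsets of S of
  equal size. Orient the edges of G so that the A-B dipaths are exactly the A-B paths whose
  interior avoids S. By Menger's theorem (proved below for finite digraphs, following Goering's
  induction on the number of arcs) it suffices that every A-B separator X of this digraph has at
  least |A| vertices. Put T = S - (A \<union> B \<union> X). Well-linkedness gives |A| + |T| disjoint paths
  from A \<union> T to B \<union> T. Each of them meets X \<union> T: otherwise it runs from A to B, and between
  its last visit to A and the next visit to B it has a segment whose interior avoids S, so it is
  a dipath that avoids X. Hence |A| + |T| \<le> |X| + |T|.
\<close>

definition dipath :: "('a \<times> 'a) set \<Rightarrow> 'a list \<Rightarrow> bool" where
  "dipath E p \<longleftrightarrow> p \<noteq> [] \<and> distinct p \<and> successively (\<lambda>u v. (u, v) \<in> E) p"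

definition separates :: "('a \<times> 'a) set \<Rightarrow> 'a set \<Rightarrow> 'a set \<Rightarrow> 'a set \<Rightarrow> bool" where
  "separates E A B X \<longleftrightarrow> (\<forall>p. dipath E p \<longrightarrow> hd p \<in> A \<longrightarrow> last p \<in> B \<longrightarrow> set p \<inter> X \<noteq> {})"

definition linkage :: "('a \<times> 'a) set \<Rightarrow> 'a set \<Rightarrow> 'a set \<Rightarrow> nat \<Rightarrow> bool" where
  "linkage E A B k \<longleftrightarrow> (\<exists>P. finite P \<and> card P = k
     \<and> (\<forall>p\<in>P. dipath E p \<and> hd p \<in> A \<and> last p \<in> B) \<and> disjoint_family_on set P)"

lemma dipath_mono: "dipath E p \<Longrightarrow> E \<subseteq> F \<Longrightarrow> dipath F p"
  unfolding dipath_def by (auto elim: successively_mono)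

lemma successively_Int_Times_iff:
  "successively (\<lambda>u v. (u, v) \<in> E \<inter> U \<times> W) p \<longleftrightarrow>
     successively (\<lambda>u v. (u, v) \<in> E) p \<and> set (butlast p) \<subseteq> U \<and> set (tl p) \<subseteq> W"
  by (induction "\<lambda>u v. (u, v) \<in> E \<inter> U \<times> W" p rule: successively.induct) auto

lemma dipath_Int_Times_iff:
  "dipath (E \<inter> U \<times> W) p \<longleftrightarrow> dipath E p \<and> set (butlast p) \<subseteq> U \<and> set (tl p) \<subseteq> W"
  unfolding dipath_def successively_Int_Times_iff by auto

lemma dipath_rev_iff: "dipath (E\<inverse>) (rev p) \<longleftrightarrow> dipath E p"
  unfolding dipath_def by simp

lemma dipath_empty_iff: "dipath {} p \<longleftrightarrow> (\<exists>v. p = [v])"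
  unfolding dipath_def by (cases p rule: remdups_adj.cases) auto

lemma dipath_appendD:
  assumes "dipath E (p @ q)"
  shows "p \<noteq> [] \<Longrightarrow> dipath E p" and "q \<noteq> [] \<Longrightarrow> dipath E q"
  using assms unfolding dipath_def by (auto simp: successively_append_iff)

lemma dipath_append:
  assumes "dipath E p" "dipath E q" "set p \<inter> set q = {}" "(last p, hd q) \<in> E"
  shows "dipath E (p @ q)"
  using assms unfolding dipath_def by (auto simp: successively_append_iff)

lemma dipath_glue:
  assumes "dipath E p" "dipath E q" "last p = hd q" "set p \<inter> set (tl q) = {}"
  shows "dipath E (p @ tl q)" "last (p @ tl q) = last q"
proof -
  obtain v r where q: "q = v # r"
    using assms(2) unfolding dipath_def by (cases q) auto
  then show "dipath E (p @ tl q)"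
    using assms unfolding dipath_def by (cases r) (auto simp: successively_append_iff)
  show "last (p @ tl q) = last q"
    using assms(1,3) q unfolding dipath_def by (cases r) auto
qed

lemma dipath_first_hit:
  assumes "dipath E p" "set p \<inter> T \<noteq> {}"
  obtains q where "dipath E q" "hd q = hd p" "last q \<in> T" "set (butlast q) \<inter> T = {}"
    "set q \<subseteq> set p"
proof -
  obtain ys w zs where p: "p = ys @ w # zs" and "w \<in> T" and ys: "\<forall>u\<in>set ys. u \<notin> T"
    using assms(2) split_list_first_prop[of p "\<lambda>u. u \<in> T"] by blast
  have "dipath E (ys @ [w])"
    using assms(1) dipath_appendD(1)[of E "ys @ [w]" zs] p by simp
  moreover have "hd (ys @ [w]) = hd p"
    using p by (cases ys) auto
  ultimately show thesis
    using \<open>w \<in> T\<close> ys p by (intro that[of "ys @ [w]"]) auto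
qed

lemma dipath_last_hit:
  assumes "dipath E p" "set p \<inter> T \<noteq> {}"
  obtains q where "dipath E q" "last q = last p" "hd q \<in> T" "set (tl q) \<inter> T = {}"
    "set q \<subseteq> set p"
proof -
  have "dipath (E\<inverse>) (rev p)" "set (rev p) \<inter> T \<noteq> {}"
    using assms by (simp_all add: dipath_rev_iff)
  then obtain q where "dipath (E\<inverse>) q" "hd q = hd (rev p)" "last q \<in> T"
    "set (butlast q) \<inter> T = {}" "set q \<subseteq> set (rev p)"
    by (rule dipath_first_hit)
  moreover have "dipath E (rev q)"
    using \<open>dipath (E\<inverse>) q\<close> dipath_rev_iff[of "E\<inverse>" q] by simp
  moreover have "set (tl (rev q)) = set (butlast q)"
    by (metis butlast_rev rev_rev_ident set_rev)
  ultimately show thesis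
    using that[of "rev q"] by (simp add: hd_rev last_rev)
qed

lemma dipath_segment:
  assumes "dipath E p" "hd p \<in> A" "last p \<in> B"
  obtains r where "dipath E r" "hd r \<in> A" "last r \<in> B" "set (tl r) \<inter> A = {}"
    "set (butlast r) \<inter> B = {}" "set r \<subseteq> set p"
proof -
  have "set p \<inter> A \<noteq> {}"
    using assms(1,2) hd_in_set unfolding dipath_def by blast
  obtain q where q: "dipath E q" "last q = last p" "hd q \<in> A" "set (tl q) \<inter> A = {}"
    "set q \<subseteq> set p"
    using assms(1) \<open>set p \<inter> A \<noteq> {}\<close> by (rule dipath_last_hit)
  have "set q \<inter> B \<noteq> {}"
    using q(1,2) assms(3) unfolding dipath_def by (metis IntI empty_iff last_in_set)
  obtain r where r: "dipath E r" "hd r = hd q" "last r \<in> B" "set (butlast r) \<inter> B = {}"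
    "set r \<subseteq> set q"
    using q(1) \<open>set q \<inter> B \<noteq> {}\<close> by (rule dipath_first_hit)
  have "set (tl r) \<subseteq> set (tl q)"
  proof
    fix v assume v: "v \<in> set (tl r)"
    have "r \<noteq> []" "distinct r" "q \<noteq> []"
      using r(1) q(1) unfolding dipath_def by auto
    then have "v \<noteq> hd r" "v \<in> set r"
      using v by (cases r; auto)+
    then show "v \<in> set (tl q)"
      using r(2,5) \<open>q \<noteq> []\<close> by (cases q) auto
  qed
  then show thesis
    using r q by (intro that[of r]) auto
qed

lemma separates_meet_subset:
  assumes sep: "separates E A B S"
    and p: "dipath E p" "hd p \<in> A" "set (butlast p) \<inter> S = {}"
    and q: "dipath E q" "last q \<in> B" "set (tl q) \<inter> S = {}"
  shows "set p \<inter> set q \<subseteq> S"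
proof (rule ccontr)
  assume "\<not> set p \<inter> set q \<subseteq> S"
  then obtain p1 w p2 where p_eq: "p = p1 @ w # p2" and w: "w \<in> set q" "w \<notin> S"
    and p1: "\<forall>u\<in>set p1. \<not> (u \<in> set q \<and> u \<notin> S)"
    using split_list_first_prop[of p "\<lambda>u. u \<in> set q \<and> u \<notin> S"] by blast
  obtain q1 q2 where q_eq: "q = q1 @ w # q2"
    using w(1) split_list by metis
  have "set p1 \<subseteq> set (butlast p)"
    using p_eq by (simp add: butlast_append)
  moreover have "set q2 \<subseteq> set (tl q)"
    using q_eq by (cases q1) auto
  ultimately have p1_S: "set p1 \<inter> S = {}" and q2_S: "set q2 \<inter> S = {}"
    using p(3) q(3) by auto
  define r where "r = (p1 @ [w]) @ tl (w # q2)"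
  have "dipath E r"
    unfolding r_def
  proof (rule dipath_glue)
    show "dipath E (p1 @ [w])"
      using dipath_appendD(1)[of E "p1 @ [w]" p2] p(1) p_eq by simp
    show "dipath E (w # q2)"
      using dipath_appendD(2)[of E q1 "w # q2"] q(1) q_eq by simp
    show "set (p1 @ [w]) \<inter> set (tl (w # q2)) = {}"
      using p1 p1_S q(1) q_eq unfolding dipath_def by auto
  qed simp
  moreover have "hd r \<in> A" "last r \<in> B"
    using p(2) q(2) p_eq q_eq unfolding r_def by (cases p1; cases q2; simp)+
  moreover have "set r \<inter> S = {}"
    using p1_S q2_S w(2) unfolding r_def by auto
  ultimately show False
    using sep unfolding separates_def by blast
qed

lemma separates_meet_ends:
  assumes sep: "separates E A B S"
    and p: "dipath E p" "hd p \<in> A" "set (butlast p) \<inter> S = {}"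
    and q: "dipath E q" "last q \<in> B" "set (tl q) \<inter> S = {}"
  shows "set p \<inter> set q \<subseteq> S \<inter> {last p} \<inter> {hd q}"
proof -
  have "set p \<inter> S \<subseteq> {last p}"
    using p(3) by (cases p rule: rev_cases) auto
  moreover have "set q \<inter> S \<subseteq> {hd q}"
    using q(3) by (cases q) auto
  ultimately show ?thesis
    using separates_meet_subset[OF assms] by blast
qed

lemma separates_via_prefix:
  assumes "separates E A B X" "E \<inter> (- X) \<times> UNIV \<subseteq> E'" "separates E' A X T"
  shows "separates E A B T"
  unfolding separates_def
proof (intro allI impI)
  fix p assume p: "dipath E p" "hd p \<in> A" "last p \<in> B"
  then have "set p \<inter> X \<noteq> {}"
    using assms(1) unfolding separates_def by blast
  with p(1) obtain q where q: "dipath E q" "hd q = hd p" "last q \<in> X"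
    "set (butlast q) \<inter> X = {}" "set q \<subseteq> set p"
    by (rule dipath_first_hit)
  then have "dipath (E \<inter> (- X) \<times> UNIV) q"
    by (auto simp: dipath_Int_Times_iff)
  then have "dipath E' q"
    using assms(2) by (rule dipath_mono)
  then have "set q \<inter> T \<noteq> {}"
    using assms(3) q p(2) unfolding separates_def by auto
  then show "set p \<inter> T \<noteq> {}"
    using q(5) by blast
qed

lemma separates_via_suffix:
  assumes "separates E A B X" "E \<inter> UNIV \<times> (- X) \<subseteq> E'" "separates E' X B T"
  shows "separates E A B T"
  unfolding separates_def
proof (intro allI impI)
  fix p assume p: "dipath E p" "hd p \<in> A" "last p \<in> B"
  then have "set p \<inter> X \<noteq> {}"
    using assms(1) unfolding separates_def by blast
  with p(1) obtain q where q: "dipath E q" "last q = last p" "hd q \<in> X"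
    "set (tl q) \<inter> X = {}" "set q \<subseteq> set p"
    by (rule dipath_last_hit)
  then have "dipath (E \<inter> UNIV \<times> (- X)) q"
    by (auto simp: dipath_Int_Times_iff)
  then have "dipath E' q"
    using assms(2) by (rule dipath_mono)
  then have "set q \<inter> T \<noteq> {}"
    using assms(3) q p(3) unfolding separates_def by auto
  then show "set p \<inter> T \<noteq> {}"
    using q(5) by blast
qed

lemma separates_insert_arc_end:
  assumes "separates (E - {(x, y)}) A B S"
  shows "separates E A B (insert x S)" and "separates E A B (insert y S)"
proof -
  have "set p \<inter> S \<noteq> {}"
    if "dipath E p" "hd p \<in> A" "last p \<in> B" "x \<notin> set p \<or> y \<notin> set p" for p
  proof -
    have "dipath (E \<inter> (- {x}) \<times> UNIV) p \<or> dipath (E \<inter> UNIV \<times> (- {y})) p"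
      using that(1,4) unfolding dipath_Int_Times_iff
      by (cases p) (auto dest: in_set_butlastD)
    then have "dipath (E - {(x, y)}) p"
      by (auto elim: dipath_mono)
    then show ?thesis
      using assms that(2,3) unfolding separates_def by blast
  qed
  then show "separates E A B (insert x S)" "separates E A B (insert y S)"
    unfolding separates_def by blast+
qed

lemma linkage_mono: "linkage E A B k \<Longrightarrow> E \<subseteq> F \<Longrightarrow> linkage F A B k"
  unfolding linkage_def by (blast intro: dipath_mono)

lemma linkage_image:
  assumes "finite I" and paths: "\<And>i. i \<in> I \<Longrightarrow> dipath E (f i) \<and> hd (f i) \<in> A \<and> last (f i) \<in> B"
    and disj: "disjoint_family_on (\<lambda>i. set (f i)) I"
  shows "linkage E A B (card I)"
proof -
  have "inj_on f I"
  proof (rule inj_onI, rule ccontr)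
    fix i j assume "i \<in> I" "j \<in> I" "f i = f j" "i \<noteq> j"
    moreover have "f i \<noteq> []"
      using paths \<open>i \<in> I\<close> unfolding dipath_def by blast
    ultimately show False
      using disjoint_family_onD[OF disj] by force
  qed
  moreover have "disjoint_family_on set (f ` I)"
    using disj unfolding disjoint_family_on_def by fastforce
  ultimately show ?thesis
    unfolding linkage_def using assms(1) paths
    by (intro exI[of _ "f ` I"]) (auto simp: card_image)
qed

lemma linkage_converse:
  assumes "linkage E A B k"
  shows "linkage (E\<inverse>) B A k"
proof -
  obtain P where P: "finite P" "card P = k" "\<forall>p\<in>P. dipath E p \<and> hd p \<in> A \<and> last p \<in> B"
    "disjoint_family_on set P"
    using assms unfolding linkage_def by blast
  have "linkage (E\<inverse>) B A (card P)"
  proof (rule linkage_image)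
    show "disjoint_family_on (\<lambda>p. set (rev p)) P"
      using P(4) by simp
  qed (use P in \<open>auto simp: dipath_rev_iff hd_rev last_rev\<close>)
  then show ?thesis
    using P(2) by simp
qed

lemma linkage_first_hits:
  assumes "linkage E A T k"
  obtains P where "finite P" "card P = k"
    "\<forall>p\<in>P. dipath E p \<and> hd p \<in> A \<and> last p \<in> T \<and> set (butlast p) \<inter> T = {}"
    "disjoint_family_on set P"
proof -
  obtain P where P: "finite P" "card P = k" "\<forall>p\<in>P. dipath E p \<and> hd p \<in> A \<and> last p \<in> T"
    "disjoint_family_on set P"
    using assms unfolding linkage_def by blast
  have "\<forall>p\<in>P. \<exists>q. dipath E q \<and> hd q \<in> A \<and> last q \<in> T \<and> set (butlast q) \<inter> T = {}
      \<and> set q \<subseteq> set p"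
  proof
    fix p assume "p \<in> P"
    then have p: "dipath E p" "hd p \<in> A" "last p \<in> T"
      using P(3) by auto
    then have "set p \<inter> T \<noteq> {}"
      unfolding dipath_def using last_in_set by blast
    with p(1) obtain q where "dipath E q" "hd q = hd p" "last q \<in> T"
      "set (butlast q) \<inter> T = {}" "set q \<subseteq> set p"
      by (rule dipath_first_hit)
    then show "\<exists>q. dipath E q \<and> hd q \<in> A \<and> last q \<in> T \<and> set (butlast q) \<inter> T = {}
        \<and> set q \<subseteq> set p"
      using p(2) by auto
  qed
  from bchoice[OF this] obtain tr where tr: "\<And>p. p \<in> P \<Longrightarrow> dipath E (tr p) \<and> hd (tr p) \<in> A
      \<and> last (tr p) \<in> T \<and> set (butlast (tr p)) \<inter> T = {} \<and> set (tr p) \<subseteq> set p"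
    by blast
  have disj: "set (tr p) \<inter> set (tr p') = {}" if "p \<in> P" "p' \<in> P" "p \<noteq> p'" for p p'
    using tr[OF that(1)] tr[OF that(2)] disjoint_family_onD[OF P(4) that] by blast
  have "inj_on tr P"
  proof (rule inj_onI, rule ccontr)
    fix p p' assume "p \<in> P" "p' \<in> P" "tr p = tr p'" "p \<noteq> p'"
    moreover have "tr p \<noteq> []"
      using tr[OF \<open>p \<in> P\<close>] unfolding dipath_def by blast
    ultimately show False
      using disj by fastforce
  qed
  show thesis
  proof (rule that[of "tr ` P"])
    show "finite (tr ` P)" "card (tr ` P) = k"
      using P(1,2) \<open>inj_on tr P\<close> by (simp_all add: card_image)
    show "\<forall>p\<in>tr ` P. dipath E p \<and> hd p \<in> A \<and> last p \<in> T \<and> set (butlast p) \<inter> T = {}"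
      using tr by blast
    show "disjoint_family_on set (tr ` P)"
      unfolding disjoint_family_on_def using disj by blast
  qed
qed

lemma linkage_onto:
  assumes "linkage E A T (card T)" "finite T"
  obtains f where
    "\<And>t. t \<in> T \<Longrightarrow> dipath E (f t) \<and> hd (f t) \<in> A \<and> last (f t) = t \<and> set (butlast (f t)) \<inter> T = {}"
    "disjoint_family_on (\<lambda>t. set (f t)) T"
proof -
  obtain P where P: "finite P" "card P = card T"
    "\<forall>p\<in>P. dipath E p \<and> hd p \<in> A \<and> last p \<in> T \<and> set (butlast p) \<inter> T = {}"
    "disjoint_family_on set P"
    using assms(1) by (rule linkage_first_hits)
  have "inj_on last P"
  proof (rule inj_onI, rule ccontr)
    fix p p' assume "p \<in> P" "p' \<in> P" "last p = last p'" "p \<noteq> p'"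
    moreover have "last p \<in> set p" "last p' \<in> set p'"
      using P(3) \<open>p \<in> P\<close> \<open>p' \<in> P\<close> unfolding dipath_def by simp_all
    ultimately show False
      using disjoint_family_onD[OF P(4), of p p'] by auto
  qed
  then have "last ` P = T"
    using P(2,3) assms(2) by (intro card_subset_eq) (auto simp: card_image)
  then have pick: "inv_into P last t \<in> P" "last (inv_into P last t) = t" if "t \<in> T" for t
    using that by (auto intro: inv_into_into f_inv_into_f)
  show thesis
  proof (rule that[of "inv_into P last"])
    fix t assume "t \<in> T"
    then show "dipath E (inv_into P last t) \<and> hd (inv_into P last t) \<in> A
        \<and> last (inv_into P last t) = t \<and> set (butlast (inv_into P last t)) \<inter> T = {}"
      using P(3) pick by blast
  next
    show "disjoint_family_on (\<lambda>t. set (inv_into P last t)) T"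
      unfolding disjoint_family_on_def
    proof (intro ballI impI)
      fix t t' assume "t \<in> T" "t' \<in> T" "t \<noteq> t'"
      then have "inv_into P last t \<noteq> inv_into P last t'"
        using pick(2)[of t] pick(2)[of t'] by force
      then show "set (inv_into P last t) \<inter> set (inv_into P last t') = {}"
        using disjoint_family_onD[OF P(4)] pick(1) \<open>t \<in> T\<close> \<open>t' \<in> T\<close> by blast
    qed
  qed
qed

lemma linkage_from:
  assumes "linkage E T B (card T)" "finite T"
  obtains g where
    "\<And>t. t \<in> T \<Longrightarrow> dipath E (g t) \<and> hd (g t) = t \<and> last (g t) \<in> B \<and> set (tl (g t)) \<inter> T = {}"
    "disjoint_family_on (\<lambda>t. set (g t)) T"
proof -
  obtain f where f: "\<And>t. t \<in> T \<Longrightarrow> dipath (E\<inverse>) (f t) \<and> hd (f t) \<in> B \<and> last (f t) = t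
      \<and> set (butlast (f t)) \<inter> T = {}"
    and disj: "disjoint_family_on (\<lambda>t. set (f t)) T"
    using linkage_onto[OF linkage_converse[OF assms(1)] assms(2)] by blast
  show thesis
  proof (rule that[of "\<lambda>t. rev (f t)"])
    fix t assume "t \<in> T"
    moreover have "set (tl (rev (f t))) = set (butlast (f t))"
      by (metis butlast_rev rev_rev_ident set_rev)
    ultimately show "dipath E (rev (f t)) \<and> hd (rev (f t)) = t \<and> last (rev (f t)) \<in> B
        \<and> set (tl (rev (f t))) \<inter> T = {}"
      using f[of t] dipath_rev_iff[of "E\<inverse>" "f t"] by (simp add: hd_rev last_rev)
  qed (use disj in simp)
qed

lemma card_le_if_disjoint_family_meets:
  assumes "finite Y" "disjoint_family_on F I" "\<And>i. i \<in> I \<Longrightarrow> F i \<inter> Y \<noteq> {}"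
  shows "card I \<le> card Y"
proof -
  have "\<forall>i\<in>I. \<exists>y. y \<in> F i \<inter> Y"
    using assms(3) by blast
  from bchoice[OF this] obtain h where h: "\<And>i. i \<in> I \<Longrightarrow> h i \<in> F i \<inter> Y"
    by blast
  have "inj_on h I"
  proof (rule inj_onI, rule ccontr)
    fix i j assume "i \<in> I" "j \<in> I" "h i = h j" "i \<noteq> j"
    then show False
      using h[of i] h[of j] disjoint_family_onD[OF assms(2), of i j] by auto
  qed
  then show ?thesis
    using h assms(1) by (intro card_inj_on_le) auto
qed

lemma disjoint_family_on_Un_reindex:
  assumes "disjoint_family_on F I" "disjoint_family_on G J" "inj_on \<phi> I" "\<phi> ` I \<subseteq> J"
    and "\<And>i j. i \<in> I \<Longrightarrow> j \<in> I \<Longrightarrow> i \<noteq> j \<Longrightarrow> F i \<inter> G (\<phi> j) = {}"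
  shows "disjoint_family_on (\<lambda>i. F i \<union> G (\<phi> i)) I"
  unfolding disjoint_family_on_def
proof (intro ballI impI)
  fix i j assume "i \<in> I" "j \<in> I" "i \<noteq> j"
  then have "F i \<inter> F j = {}" "G (\<phi> i) \<inter> G (\<phi> j) = {}"
    using assms(1-4) unfolding disjoint_family_on_def inj_on_def by blast+
  moreover have "F i \<inter> G (\<phi> j) = {}" "F j \<inter> G (\<phi> i) = {}"
    using assms(5) \<open>i \<in> I\<close> \<open>j \<in> I\<close> \<open>i \<noteq> j\<close> by auto
  ultimately show "(F i \<union> G (\<phi> i)) \<inter> (F j \<union> G (\<phi> j)) = {}"
    by blast
qed

lemma linkage_join:
  assumes sep: "separates E' A B S" and "finite S" "x \<notin> S" "y \<notin> S"
    and "E' \<subseteq> E" "(x, y) \<in> E"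
    and f: "\<And>s. s \<in> insert x S \<Longrightarrow>
      dipath E' (f s) \<and> hd (f s) \<in> A \<and> last (f s) = s \<and> set (butlast (f s)) \<inter> insert x S = {}"
    and f_disj: "disjoint_family_on (\<lambda>s. set (f s)) (insert x S)"
    and g: "\<And>t. t \<in> insert y S \<Longrightarrow>
      dipath E' (g t) \<and> hd (g t) = t \<and> last (g t) \<in> B \<and> set (tl (g t)) \<inter> insert y S = {}"
    and g_disj: "disjoint_family_on (\<lambda>t. set (g t)) (insert y S)"
  shows "linkage E A B (card (insert x S))"
proof -
  define \<phi> where "\<phi> s = (if s = x then y else s)" for s
  define h where "h s = (if s = x then f x @ g y else f s @ tl (g s))" for s
  have f_ne: "f s \<noteq> []" if "s \<in> insert x S" for s
    using f[OF that] unfolding dipath_def by blast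
  have g_ne: "g t \<noteq> []" if "t \<in> insert y S" for t
    using g[OF that] unfolding dipath_def by blast
  have meet: "set (f s) \<inter> set (g t) \<subseteq> S \<inter> {s} \<inter> {t}"
    if "s \<in> insert x S" "t \<in> insert y S" for s t
    using separates_meet_ends[OF sep, of "f s" "g t"] f[OF that(1)] g[OF that(2)] by auto
  have h_paths: "dipath E (h s) \<and> hd (h s) \<in> A \<and> last (h s) \<in> B" if "s \<in> insert x S" for s
  proof (cases "s = x")
    case True
    have "set (f x) \<inter> set (g y) = {}"
      using meet[of x y] \<open>x \<notin> S\<close> by auto
    then have "dipath E (f x @ g y)"
      using f[of x] g[of y] \<open>(x, y) \<in> E\<close> \<open>E' \<subseteq> E\<close> g_ne[of y]
      by (intro dipath_append) (auto intro: dipath_mono)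
    then show ?thesis
      using True f[of x] g[of y] f_ne[of x] g_ne[of y] unfolding h_def by simp
  next
    case False
    then have "s \<in> S"
      using that by simp
    have "set (f s) \<inter> set (tl (g s)) = {}"
      using meet[of s s] g[of s] \<open>s \<in> S\<close> list.set_sel(2)[OF g_ne[of s]] by auto
    moreover have "dipath E (f s)" "dipath E (g s)"
      using f[of s] g[of s] \<open>s \<in> S\<close> \<open>E' \<subseteq> E\<close> dipath_mono by auto
    ultimately have "dipath E (f s @ tl (g s))" "last (f s @ tl (g s)) = last (g s)"
      using f[of s] g[of s] \<open>s \<in> S\<close> dipath_glue[of E "f s" "g s"] by auto
    then show ?thesis
      using False f[of s] g[of s] \<open>s \<in> S\<close> f_ne[of s] unfolding h_def by simp
  qed
  have h_sub: "set (h s) \<subseteq> set (f s) \<union> set (g (\<phi> s))" for s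
    unfolding h_def \<phi>_def by (cases "g s") auto
  have "inj_on \<phi> (insert x S)" "\<phi> ` insert x S \<subseteq> insert y S"
    using \<open>x \<notin> S\<close> \<open>y \<notin> S\<close> unfolding \<phi>_def inj_on_def by auto
  moreover have "set (f s) \<inter> set (g (\<phi> s')) = {}"
    if "s \<in> insert x S" "s' \<in> insert x S" "s \<noteq> s'" for s s'
    using meet[OF that(1) \<open>\<phi> ` insert x S \<subseteq> insert y S\<close>[THEN subsetD, OF imageI, OF that(2)]]
      that \<open>y \<notin> S\<close> unfolding \<phi>_def by (auto split: if_splits)
  ultimately have "disjoint_family_on (\<lambda>s. set (f s) \<union> set (g (\<phi> s))) (insert x S)"
    using f_disj g_disj by (intro disjoint_family_on_Un_reindex)
  then have "disjoint_family_on (\<lambda>s. set (h s)) (insert x S)"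
    by (rule disjoint_family_on_bisimulation) (use h_sub in blast)
  then show ?thesis
    using \<open>finite S\<close> h_paths by (intro linkage_image) auto
qed

lemma menger_no_arcs:
  assumes "finite A" "\<And>X. finite X \<Longrightarrow> separates {} A B X \<Longrightarrow> k \<le> card X"
  shows "linkage {} A B k"
proof -
  have "separates {} A B (A \<inter> B)"
    unfolding separates_def by (auto simp: dipath_empty_iff)
  then have "k \<le> card (A \<inter> B)"
    using assms by simp
  then obtain C where C: "C \<subseteq> A \<inter> B" "card C = k"
    by (meson obtain_subset_with_card_n)
  have "linkage {} A B (card C)"
    using C(1) assms(1) finite_subset[of C A]
    by (intro linkage_image[where f = "\<lambda>v. [v]"]) (auto simp: dipath_def disjoint_family_on_def)
  then show ?thesis
    using C(2) by simp
qed

lemma small_separator_after_arc_deletion: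
  assumes "finite S" "separates (E - {(x, y)}) A B S" "card S < k"
    and large: "\<And>X. finite X \<Longrightarrow> separates E A B X \<Longrightarrow> k \<le> card X"
  shows "x \<notin> S" "y \<notin> S" "card (insert x S) = k" "card (insert y S) = k"
proof -
  have "k \<le> card (insert x S)" "k \<le> card (insert y S)"
    using large assms(1) separates_insert_arc_end[OF assms(2)] by simp_all
  then show "x \<notin> S" "y \<notin> S" "card (insert x S) = k" "card (insert y S) = k"
    using assms(1,3) by (auto simp: card_insert_if split: if_splits)
qed

text \<open>
  Goering's step: if deleting the arc (x, y) leaves a separator S with |S| < k, then S + x and
  S + y separate A from B in E, so both have exactly k elements; by induction there are k
  disjoint dipaths from A onto S + x and from S + y to B avoiding (x, y). These can meet only
  in S, and glue along S and the arc (x, y).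
\<close>

lemma menger_step:
  assumes IH: "\<And>A' B' k'. finite A' \<Longrightarrow> (\<And>X. finite X \<Longrightarrow> separates E' A' B' X \<Longrightarrow> k' \<le> card X)
      \<Longrightarrow> linkage E' A' B' k'"
    and E': "E' = E - {(x, y)}" and "(x, y) \<in> E" and "finite A"
    and large: "\<And>X. finite X \<Longrightarrow> separates E A B X \<Longrightarrow> k \<le> card X"
    and S: "finite S" "separates E' A B S" "card S < k"
  shows "linkage E A B k"
proof -
  note S_facts = small_separator_after_arc_deletion[OF S(1) S(2)[unfolded E'] S(3) large]
  have "linkage E' A (insert x S) (card (insert x S))"
  proof (rule IH)
    fix T assume "finite T" "separates E' A (insert x S) T"
    moreover have "E \<inter> (- insert x S) \<times> UNIV \<subseteq> E'"
      unfolding E' by auto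
    ultimately have "separates E A B T"
      using separates_via_prefix[OF separates_insert_arc_end(1)[OF S(2)[unfolded E']]] by blast
    then show "card (insert x S) \<le> card T"
      using large \<open>finite T\<close> S_facts by simp
  qed fact
  from linkage_onto[OF this] obtain f where f:
    "\<And>s. s \<in> insert x S \<Longrightarrow>
      dipath E' (f s) \<and> hd (f s) \<in> A \<and> last (f s) = s \<and> set (butlast (f s)) \<inter> insert x S = {}"
    and f_disj: "disjoint_family_on (\<lambda>s. set (f s)) (insert x S)"
    using S(1) by blast
  have "linkage E' (insert y S) B (card (insert y S))"
  proof (rule IH)
    fix T assume "finite T" "separates E' (insert y S) B T"
    moreover have "E \<inter> UNIV \<times> (- insert y S) \<subseteq> E'"
      unfolding E' by auto
    ultimately have "separates E A B T"
      using separates_via_suffix[OF separates_insert_arc_end(2)[OF S(2)[unfolded E']]] by blast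
    then show "card (insert y S) \<le> card T"
      using large \<open>finite T\<close> S_facts by simp
  qed (use S(1) in simp)
  from linkage_from[OF this] obtain g where g:
    "\<And>t. t \<in> insert y S \<Longrightarrow>
      dipath E' (g t) \<and> hd (g t) = t \<and> last (g t) \<in> B \<and> set (tl (g t)) \<inter> insert y S = {}"
    and g_disj: "disjoint_family_on (\<lambda>t. set (g t)) (insert y S)"
    using S(1) by blast
  have "E' \<subseteq> E"
    unfolding E' by blast
  from linkage_join[OF S(2,1) S_facts(1,2) this \<open>(x, y) \<in> E\<close> f f_disj g g_disj]
  show ?thesis
    using S_facts(3) by simp
qed

theorem menger:
  assumes "finite E" "finite A" "\<And>X. finite X \<Longrightarrow> separates E A B X \<Longrightarrow> k \<le> card X"
  shows "linkage E A B k"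
  using assms
proof (induction "card E" arbitrary: E A B k rule: less_induct)
  case less
  show ?case
  proof (cases "E = {}")
    case True
    then show ?thesis
      using less.prems(2,3) menger_no_arcs by blast
  next
    case False
    then obtain x y where "(x, y) \<in> E"
      by auto
    define E' where "E' = E - {(x, y)}"
    have "card E' < card E"
      unfolding E'_def using less.prems(1) \<open>(x, y) \<in> E\<close> by (rule card_Diff1_less)
    then have IH: "linkage E' A' B' k'"
      if "finite A'" "\<And>X. finite X \<Longrightarrow> separates E' A' B' X \<Longrightarrow> k' \<le> card X" for A' B' k'
      using less.hyps that less.prems(1) unfolding E'_def by blast
    show ?thesis
    proof (cases "\<exists>S. finite S \<and> separates E' A B S \<and> card S < k")
      case True
      then obtain S where "finite S" "separates E' A B S" "card S < k"
        by blast
      with IH E'_def \<open>(x, y) \<in> E\<close> less.prems(2,3) show ?thesis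
        by (rule menger_step)
    next
      case False
      then have "linkage E' A B k"
        using IH less.prems(2) by (meson not_le)
      then show ?thesis
        unfolding E'_def by (rule linkage_mono) blast
    qed
  qed
qed

lemma is_path_iff_dipath: "is_path V E p \<longleftrightarrow> dipath {(u, v). E u v} p \<and> set p \<subseteq> V"
  unfolding is_path_def dipath_def successively_conv_nth by auto

lemma internal_subset_tl: "internal p \<subseteq> set (tl p)"
  unfolding internal_def by (auto dest: in_set_butlastD)

lemma internal_subset_butlast: "internal p \<subseteq> set (butlast p)"
  unfolding internal_def butlast_tl by (cases "butlast p") auto

lemma butlast_tl_subset_internal:
  "set (butlast p) \<subseteq> insert (hd p) (internal p)" "set (tl p) \<subseteq> insert (last p) (internal p)"
  unfolding internal_def by (cases p; cases "tl p" rule: rev_cases; auto)+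

lemma disjoint_paths_mono:
  "disjoint_paths V E Q A B \<Longrightarrow> (\<And>p. Q p \<Longrightarrow> Q' p) \<Longrightarrow> disjoint_paths V E Q' A B"
  unfolding disjoint_paths_def by blast

text \<open>
  The A-B dipaths of this digraph are exactly the A-B paths of the graph that meet A and B only
  at their ends and whose interior avoids S.
\<close>

definition external_arcs :: "('a \<Rightarrow> 'a \<Rightarrow> bool) \<Rightarrow> 'a set \<Rightarrow> 'a set \<Rightarrow> 'a set \<Rightarrow> ('a \<times> 'a) set" where
  "external_arcs E S A B = {(u, v). E u v} \<inter> ((A \<union> - S) - B) \<times> ((B \<union> - S) - A)"

lemma external_arcs_finite: "graph V E \<Longrightarrow> finite (external_arcs E S A B)"
  unfolding graph_def external_arcs_def
  by (rule finite_subset[of _ "V \<times> V"]) auto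

lemma external_dipath_is_path:
  assumes "graph V E" "A \<subseteq> V" "dipath (external_arcs E S A B) p" "hd p \<in> A"
  shows "is_path V E p" "internal p \<inter> S = {}"
proof -
  have arcs: "dipath {(u, v). E u v} p" "set (butlast p) \<subseteq> (A \<union> - S) - B"
    "set (tl p) \<subseteq> (B \<union> - S) - A"
    using assms(3) unfolding external_arcs_def dipath_Int_Times_iff by blast+
  have "{(u, v). E u v} \<subseteq> {(u, v). E u v} \<inter> V \<times> V"
    using assms(1) unfolding graph_def by auto
  with arcs(1) have "dipath ({(u, v). E u v} \<inter> V \<times> V) p"
    by (rule dipath_mono)
  then have "set (tl p) \<subseteq> V"
    unfolding dipath_Int_Times_iff by blast
  then have "set p \<subseteq> V"
    using assms(2,4) by (cases p) auto
  then show "is_path V E p"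
    using arcs(1) by (simp add: is_path_iff_dipath)
  show "internal p \<inter> S = {}"
    using internal_subset_tl[of p] internal_subset_butlast[of p] arcs(2,3) by blast
qed

lemma external_segment:
  assumes "dipath {(u, v). E u v} p" "hd p \<in> A" "last p \<in> B" "set p \<inter> S \<subseteq> A \<union> B"
  obtains r where "dipath (external_arcs E S A B) r" "hd r \<in> A" "last r \<in> B" "set r \<subseteq> set p"
proof -
  obtain r where r: "dipath {(u, v). E u v} r" "hd r \<in> A" "last r \<in> B" "set (tl r) \<inter> A = {}"
    "set (butlast r) \<inter> B = {}" "set r \<subseteq> set p"
    using assms(1-3) by (rule dipath_segment)
  have "internal r \<subseteq> set p"
    using internal_subset_butlast[of r] r(6) by (auto dest: in_set_butlastD)
  then have "internal r \<inter> S = {}"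
    using internal_subset_tl[of r] internal_subset_butlast[of r] r(4,5) assms(4) by blast
  then have "set (butlast r) \<subseteq> (A \<union> - S) - B" "set (tl r) \<subseteq> (B \<union> - S) - A"
    using butlast_tl_subset_internal[of r] r(2-5) by auto
  then have "dipath (external_arcs E S A B) r"
    using r(1) unfolding external_arcs_def dipath_Int_Times_iff by blast
  then show thesis
    using that r by blast
qed

lemma well_linked_separator_bound:
  assumes G: "graph V E" and "S \<subseteq> V" and wl: "well_linked V E S"
    and AS: "A \<subseteq> S" and BS: "B \<subseteq> S" and "card A = card B"
    and "finite X" and sep: "separates (external_arcs E S A B) A B X"
  shows "card A \<le> card X"
proof -
  define T where "T = S - (A \<union> B \<union> X)"
  have "finite S"
    using G \<open>S \<subseteq> V\<close> finite_subset unfolding graph_def by blast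
  then have fin: "finite A" "finite B" "finite T"
    using AS BS finite_subset unfolding T_def by auto
  have card_AT: "card (A \<union> T) = card A + card T" and "card (B \<union> T) = card B + card T"
    using fin by (auto simp: T_def intro: card_Un_disjoint)
  then have "card (A \<union> T) = card (B \<union> T)"
    using \<open>card A = card B\<close> by simp
  moreover have "A \<union> T \<subseteq> S" "B \<union> T \<subseteq> S"
    using AS BS unfolding T_def by auto
  ultimately have "disjoint_paths V E (\<lambda>p. True) (A \<union> T) (B \<union> T)"
    using wl unfolding well_linked_def by blast
  then obtain P where P: "finite P" "card P = card (A \<union> T)"
    "\<forall>p\<in>P. is_path V E p \<and> hd p \<in> A \<union> T \<and> last p \<in> B \<union> T" "disjoint_family_on set P"
    unfolding disjoint_paths_def disjoint_family_on_def by blast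
  have "set p \<inter> (X \<union> T) \<noteq> {}" if "p \<in> P" for p
  proof
    assume avoid: "set p \<inter> (X \<union> T) = {}"
    have p: "dipath {(u, v). E u v} p" "hd p \<in> A \<union> T" "last p \<in> B \<union> T"
      using P(3) that by (auto simp: is_path_iff_dipath)
    moreover have "hd p \<in> set p" "last p \<in> set p"
      using p(1) unfolding dipath_def by auto
    ultimately have "hd p \<in> A" "last p \<in> B"
      using avoid by auto
    moreover have "set p \<inter> S \<subseteq> A \<union> B"
      using avoid unfolding T_def by blast
    ultimately obtain r where "dipath (external_arcs E S A B) r" "hd r \<in> A" "last r \<in> B"
      "set r \<subseteq> set p"
      using p(1) external_segment by metis
    then show False
      using sep avoid unfolding separates_def by blast
  qed
  then have "card P \<le> card (X \<union> T)"
    using \<open>finite X\<close> fin(3) P(4) by (intro card_le_if_disjoint_family_meets) auto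
  also have "\<dots> \<le> card X + card T"
    by (rule card_Un_le)
  finally show ?thesis
    using P(2) card_AT by simp
qed

lemma well_linked_imp_externally_well_linked:
  assumes G: "graph V E" and "S \<subseteq> V" and "well_linked V E S"
  shows "externally_well_linked V E S"
  unfolding externally_well_linked_def
proof (intro allI impI)
  fix A B assume AS: "A \<subseteq> S" and BS: "B \<subseteq> S" and "card A = card B"
  have "finite A"
    using G AS \<open>S \<subseteq> V\<close> unfolding graph_def by (metis finite_subset subset_trans)
  have "linkage (external_arcs E S A B) A B (card A)"
  proof (rule menger)
    show "finite (external_arcs E S A B)"
      using G by (rule external_arcs_finite)
    show "card A \<le> card X" if "finite X" "separates (external_arcs E S A B) A B X" for X
      using well_linked_separator_bound[OF assms AS BS \<open>card A = card B\<close> that] .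
  qed fact
  then obtain P where P: "finite P" "card P = card A"
    "\<forall>p\<in>P. dipath (external_arcs E S A B) p \<and> hd p \<in> A \<and> last p \<in> B" "disjoint_family_on set P"
    unfolding linkage_def by blast
  have "A \<subseteq> V"
    using AS \<open>S \<subseteq> V\<close> by blast
  have good: "is_path V E p \<and> internal p \<inter> S = {}" if "p \<in> P" for p
  proof -
    have "dipath (external_arcs E S A B) p" "hd p \<in> A"
      using P(3) that by auto
    from external_dipath_is_path[OF G \<open>A \<subseteq> V\<close> this] show ?thesis ..
  qed
  show "disjoint_paths V E (\<lambda>p. internal p \<inter> S = {}) A B"
    unfolding disjoint_paths_def
  proof (intro exI[of _ P] conjI)
    show "\<forall>p\<in>P. is_path V E p \<and> hd p \<in> A \<and> last p \<in> B \<and> internal p \<inter> S = {}"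
      using P(3) good by blast
    show "\<forall>p\<in>P. \<forall>q\<in>P. p \<noteq> q \<longrightarrow> set p \<inter> set q = {}"
      using P(4) unfolding disjoint_family_on_def .
  qed (use P(1,2) in simp_all)
qed

theorem lemma15:
  assumes "graph V E" and "S \<subseteq> V"
  shows "well_linked V E S \<longleftrightarrow> externally_well_linked V E S"
proof
  show "well_linked V E S \<Longrightarrow> externally_well_linked V E S"
    using assms by (intro well_linked_imp_externally_well_linked)
next
  assume "externally_well_linked V E S"
  then show "well_linked V E S"
    unfolding well_linked_def externally_well_linked_def
    by (metis (mono_tags, lifting) disjoint_paths_mono)
qed

end
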